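(* Let $H=(V,F)$ be a finite hypergraph, $(r_i)_{i\in V}$ positive integers, and $\boldsymbol u=\{u^\alpha_{i\to j}\}$ arbitrary matrix weights with $u^\alpha_{i\to j}\in\mathbb{C}^{r_j\times r_i}$ ($\alpha\in F$, distinct $i,j\in\alpha$). Fix norms on each $\mathbb{C}^{r_i}$, let $\|\cdot\|$ be the induced operator norms, and let $\|\boldsymbol u\|=\{\|u^\alpha_{i\to j}\|\}$ be the corresponding scalar weights. Then $$\rho(\mathcal M(\boldsymbol u))\le\rho(\mathcal M(\|\boldsymbol u\|))\le\max_{\alpha,i,j}\|u^\alpha_{i\to j}\|\,\rho(\mathcal M),$$ where $\rho$ denotes spectral radius.
   Context: Directed edges $\vec E=\{(\alpha\to i):i\in\alpha\in F\}$ with $s(\alpha\to i)=\alpha$, $t(\alpha\to i)=i$; $e'\rightharpoonup e$ means $t(e')\in s(e)$, $t(e')\ne t(e)$, $s(e')\ne s(e)$. For matrix weights $\boldsymbol v$, $\mathcal M(\boldsymbol v)$ acts on $\bigoplus_e\mathbb{C}^{r_{t(e)}}$ by $(\mathcal M(\boldsymbol v)f)(e)=\sum_{e':e'\rightharpoonup e}v^{s(e)}_{t(e')\to t(e)}f(e')$; for scalar weights (all $r_i=1$) it is a $|\vec E|\times|\vec E|$ matrix. $\mathcal M$ (the directed edge matrix) denotes $\mathcal M(\boldsymbol 1)$ with all $r_i=1$ and all weights equal to $1$. *)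

theory Defs
  imports Complex_Main
begin

text \<open>Directed edges of a hypergraph: pairs (alpha, i) standing for alpha -> i, with i in alpha in F.
  s(alpha -> i) = alpha = fst, t(alpha -> i) = i = snd.\<close>

type_synonym 'v dedge = "'v set \<times> 'v"

definition dedges :: "'v set set \<Rightarrow> 'v dedge set" where
  "dedges F = {(\<alpha>, i). \<alpha> \<in> F \<and> i \<in> \<alpha>}"

definition arc :: "'v dedge \<Rightarrow> 'v dedge \<Rightarrow> bool" where
  "arc e' e \<longleftrightarrow> snd e' \<in> fst e \<and> snd e' \<noteq> snd e \<and> fst e' \<noteq> fst e"

text \<open>C^r as functions nat => complex vanishing from index r on; an m x n matrix is a function
  nat => nat => complex (row index < m, column index < n) acting by mat_app.\<close>
definition cvec_space :: "nat \<Rightarrow> (nat \<Rightarrow> complex) set" where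
  "cvec_space r = {x. \<forall>k\<ge>r. x k = 0}"

definition mat_app :: "nat \<Rightarrow> nat \<Rightarrow> (nat \<Rightarrow> nat \<Rightarrow> complex) \<Rightarrow> (nat \<Rightarrow> complex) \<Rightarrow> (nat \<Rightarrow> complex)" where
  "mat_app m n A x = (\<lambda>k. if k < m then (\<Sum>l<n. A k l * x l) else 0)"

text \<open>The space (direct sum over directed edges e of C^{r_{t(e)}}).\<close>
definition dspace :: "'v set set \<Rightarrow> ('v \<Rightarrow> nat) \<Rightarrow> ('v dedge \<Rightarrow> nat \<Rightarrow> complex) set" where
  "dspace F r = {f. \<forall>e k. (e \<notin> dedges F \<or> r (snd e) \<le> k) \<longrightarrow> f e k = 0}"

text \<open>The operator M(v); the weight v alpha i j is the r_j x r_i matrix v^alpha_{i -> j}.\<close>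
definition M_op :: "'v set set \<Rightarrow> ('v \<Rightarrow> nat) \<Rightarrow> ('v set \<Rightarrow> 'v \<Rightarrow> 'v \<Rightarrow> nat \<Rightarrow> nat \<Rightarrow> complex)
    \<Rightarrow> ('v dedge \<Rightarrow> nat \<Rightarrow> complex) \<Rightarrow> ('v dedge \<Rightarrow> nat \<Rightarrow> complex)" where
  "M_op F r v f = (\<lambda>e k. if e \<in> dedges F then
      (\<Sum>e'\<in>{e' \<in> dedges F. arc e' e}. mat_app (r (snd e)) (r (snd e')) (v (fst e) (snd e') (snd e)) (f e') k)
    else 0)"

definition is_eigenvalue :: "('x \<Rightarrow> nat \<Rightarrow> complex) set \<Rightarrow> (('x \<Rightarrow> nat \<Rightarrow> complex) \<Rightarrow> ('x \<Rightarrow> nat \<Rightarrow> complex)) \<Rightarrow> complex \<Rightarrow> bool" where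
  "is_eigenvalue W T c \<longleftrightarrow> (\<exists>f\<in>W. f \<noteq> (\<lambda>_ _. 0) \<and> T f = (\<lambda>e k. c * f e k))"

definition spectral_radius_op :: "('x \<Rightarrow> nat \<Rightarrow> complex) set \<Rightarrow> (('x \<Rightarrow> nat \<Rightarrow> complex) \<Rightarrow> ('x \<Rightarrow> nat \<Rightarrow> complex)) \<Rightarrow> real" where
  "spectral_radius_op W T = Sup (insert 0 (cmod ` {c. is_eigenvalue W T c}))"

definition rho_M :: "'v set set \<Rightarrow> ('v \<Rightarrow> nat) \<Rightarrow> ('v set \<Rightarrow> 'v \<Rightarrow> 'v \<Rightarrow> nat \<Rightarrow> nat \<Rightarrow> complex) \<Rightarrow> real" where
  "rho_M F r v = spectral_radius_op (dspace F r) (M_op F r v)"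

definition is_cnorm :: "nat \<Rightarrow> ((nat \<Rightarrow> complex) \<Rightarrow> real) \<Rightarrow> bool" where
  "is_cnorm r N \<longleftrightarrow>
     (\<forall>x\<in>cvec_space r. 0 \<le> N x \<and> (N x = 0 \<longleftrightarrow> x = (\<lambda>_. 0))) \<and>
     (\<forall>x\<in>cvec_space r. \<forall>c. N (\<lambda>k. c * x k) = cmod c * N x) \<and>
     (\<forall>x\<in>cvec_space r. \<forall>y\<in>cvec_space r. N (\<lambda>k. x k + y k) \<le> N x + N y)"

definition op_norm :: "((nat \<Rightarrow> complex) \<Rightarrow> real) \<Rightarrow> ((nat \<Rightarrow> complex) \<Rightarrow> real) \<Rightarrow> nat \<Rightarrow> nat
    \<Rightarrow> (nat \<Rightarrow> nat \<Rightarrow> complex) \<Rightarrow> real" where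
  "op_norm Nin Nout m n A = Sup {Nout (mat_app m n A x) | x. x \<in> cvec_space n \<and> Nin x = 1}"

definition norm_weights :: "('v \<Rightarrow> (nat \<Rightarrow> complex) \<Rightarrow> real) \<Rightarrow> ('v \<Rightarrow> nat)
    \<Rightarrow> ('v set \<Rightarrow> 'v \<Rightarrow> 'v \<Rightarrow> nat \<Rightarrow> nat \<Rightarrow> complex) \<Rightarrow> ('v set \<Rightarrow> 'v \<Rightarrow> 'v \<Rightarrow> nat \<Rightarrow> nat \<Rightarrow> complex)" where
  "norm_weights N r u = (\<lambda>\<alpha> i j _ _. complex_of_real (op_norm (N i) (N j) (r j) (r i) (u \<alpha> i j)))"

end

theory Submission
  imports Defs "Jordan_Normal_Form.Spectral_Radius"
begin

(* Let f be an eigenvector of M(u) for the eigenvalue c. The componentwise norms g(e) = |f(e)|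
   form a nonnegative nonzero vector with |c| g <= M(|u|) g entrywise, by the triangle inequality
   and the operator norm bound. For a nonnegative matrix such a subinvariant vector forces
   |c| <= rho (Collatz-Wielandt): if the spectral radius were smaller, rescale the matrix by some
   t strictly between the two, so that its powers stay bounded (Jordan normal form), while they
   multiply g by the growing factors (|c| / t)^k. The second inequality is the same argument,
   applied to |x| for an eigenvector x of M(|u|), whose entries are dominated by
   max |u| times those of M. *)

section \<open>Norms on finite-dimensional complex spaces\<close>

lemma cvec_scale: "x \<in> cvec_space r \<Longrightarrow> (\<lambda>k. c * x k) \<in> cvec_space r"
  and cvec_diff: "x \<in> cvec_space r \<Longrightarrow> y \<in> cvec_space r \<Longrightarrow> (\<lambda>k. x k - y k) \<in> cvec_space r"
  and cvec_sum: "(\<And>i. i \<in> I \<Longrightarrow> X i \<in> cvec_space r) \<Longrightarrow> (\<lambda>k. \<Sum>i\<in>I. X i k) \<in> cvec_space r"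
  and mat_app_in_cvec_space: "mat_app m n A y \<in> cvec_space m"
  by (simp_all add: cvec_space_def mat_app_def)

lemma mat_app_scale: "mat_app m n A (\<lambda>k. c * x k) = (\<lambda>k. c * mat_app m n A x k)"
  by (auto simp: mat_app_def sum_distrib_left mult.left_commute)

definition cvec_unit :: "nat \<Rightarrow> nat \<Rightarrow> complex" where
  "cvec_unit l = (\<lambda>k. if k = l then 1 else 0)"

definition l1_norm :: "nat \<Rightarrow> (nat \<Rightarrow> complex) \<Rightarrow> real" where
  "l1_norm r x = (\<Sum>l<r. cmod (x l))"

lemma cvec_unit_in_cvec_space: "l < r \<Longrightarrow> cvec_unit l \<in> cvec_space r"
  by (simp add: cvec_unit_def cvec_space_def)

lemma cvec_eq_sum_units:
  assumes "x \<in> cvec_space r"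
  shows "x = (\<lambda>k. \<Sum>l<r. x l * cvec_unit l k)"
proof
  fix k
  have "(\<Sum>l<r. x l * cvec_unit l k) = (\<Sum>l<r. if k = l then x l else 0)"
    by (intro sum.cong) (auto simp: cvec_unit_def)
  then show "x k = (\<Sum>l<r. x l * cvec_unit l k)"
    using assms by (simp add: sum.delta' cvec_space_def)
qed

lemma l1_norm_scale: "l1_norm r (\<lambda>k. c * x k) = cmod c * l1_norm r x"
  by (simp add: l1_norm_def norm_mult sum_distrib_left)

lemma coord_le_l1_norm: "l < r \<Longrightarrow> cmod (x l) \<le> l1_norm r x"
  unfolding l1_norm_def by (rule member_le_sum) auto

lemma l1_norm_mat_app:
  assumes "x \<in> cvec_space n"
  shows "l1_norm m (mat_app m n A x) \<le> (\<Sum>k<m. \<Sum>l<n. cmod (A k l)) * l1_norm n x"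
proof -
  have "l1_norm m (mat_app m n A x) = (\<Sum>k<m. cmod (\<Sum>l<n. A k l * x l))"
    by (simp add: l1_norm_def mat_app_def)
  also have "\<dots> \<le> (\<Sum>k<m. (\<Sum>l<n. cmod (A k l)) * l1_norm n x)"
    by (intro sum_mono order_trans[OF norm_sum])
      (auto simp: norm_mult sum_distrib_right intro!: sum_mono mult_left_mono coord_le_l1_norm)
  also have "\<dots> = (\<Sum>k<m. \<Sum>l<n. cmod (A k l)) * l1_norm n x"
    by (simp add: sum_distrib_right)
  finally show ?thesis .
qed

lemma bounded_real_seq_convergent_subseq:
  fixes X :: "nat \<Rightarrow> real"
  assumes "\<And>j. \<bar>X j\<bar> \<le> B"
  obtains \<sigma> where "strict_mono \<sigma>" and "convergent (X \<circ> \<sigma>)"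
proof -
  obtain \<sigma> where "strict_mono \<sigma>" "monoseq (X \<circ> \<sigma>)" using seq_monosub[of X] by (auto simp: comp_def)
  moreover have "Bseq (X \<circ> \<sigma>)" using assms by (intro BseqI'[where K = B]) simp
  ultimately show thesis using that Bseq_monoseq_convergent by blast
qed

lemma bounded_complex_seq_convergent_subseq:
  fixes X :: "nat \<Rightarrow> complex"
  assumes B: "\<And>j. cmod (X j) \<le> B"
  obtains \<sigma> where "strict_mono \<sigma>" and "convergent (X \<circ> \<sigma>)"
proof -
  obtain \<sigma>1 where \<sigma>1: "strict_mono \<sigma>1" "convergent ((\<lambda>j. Re (X j)) \<circ> \<sigma>1)"
    using bounded_real_seq_convergent_subseq[of "\<lambda>j. Re (X j)" B] B abs_Re_le_cmod order_trans by blast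
  obtain \<sigma>2 where \<sigma>2: "strict_mono \<sigma>2" "convergent ((\<lambda>j. Im (X (\<sigma>1 j))) \<circ> \<sigma>2)"
    using bounded_real_seq_convergent_subseq[of "\<lambda>j. Im (X (\<sigma>1 j))" B] B abs_Im_le_cmod order_trans by blast
  have "convergent ((\<lambda>j. Re (X j)) \<circ> \<sigma>1 \<circ> \<sigma>2)"
    using \<sigma>1(2) \<sigma>2(1) by (rule convergent_subseq_convergent)
  with \<sigma>2(2) obtain a b where "(\<lambda>j. Re ((X \<circ> (\<sigma>1 \<circ> \<sigma>2)) j)) \<longlonglongrightarrow> a"
      "(\<lambda>j. Im ((X \<circ> (\<sigma>1 \<circ> \<sigma>2)) j)) \<longlonglongrightarrow> b"
    by (auto simp: convergent_def comp_def)
  then have "(X \<circ> (\<sigma>1 \<circ> \<sigma>2)) \<longlonglongrightarrow> Complex a b"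
    by (simp add: tendsto_complex_iff)
  then have "convergent (X \<circ> (\<sigma>1 \<circ> \<sigma>2))"
    unfolding convergent_def by blast
  with \<sigma>1(1) \<sigma>2(1) show thesis using that strict_mono_o by blast
qed

lemma bounded_coords_convergent_subseq:
  fixes X :: "nat \<Rightarrow> nat \<Rightarrow> complex"
  assumes B: "\<And>j l. cmod (X j l) \<le> B"
  shows "\<exists>\<sigma>. strict_mono \<sigma> \<and> (\<forall>l<r. convergent (\<lambda>j. X (\<sigma> j) l))"
proof (induction r)
  case 0
  show ?case using strict_mono_id by (auto simp: id_def)
next
  case (Suc r)
  then obtain \<sigma> where \<sigma>: "strict_mono \<sigma>" "\<forall>l<r. convergent (\<lambda>j. X (\<sigma> j) l)" by blast
  obtain \<tau> where \<tau>: "strict_mono \<tau>" "convergent ((\<lambda>j. X (\<sigma> j) r) \<circ> \<tau>)"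
    using bounded_complex_seq_convergent_subseq[of "\<lambda>j. X (\<sigma> j) r" B] B by blast
  have "convergent ((\<lambda>j. X (\<sigma> j) l) \<circ> \<tau>)" if "l < Suc r" for l
    using \<sigma>(2) \<tau> that less_Suc_eq by (metis convergent_subseq_convergent)
  moreover have "strict_mono (\<sigma> \<circ> \<tau>)" using \<sigma>(1) \<tau>(1) by (rule strict_mono_o)
  ultimately show ?case by (auto simp: comp_def)
qed

context
  fixes r :: nat and N :: "(nat \<Rightarrow> complex) \<Rightarrow> real"
  assumes N: "is_cnorm r N"
begin

lemma cnorm_nonneg: "x \<in> cvec_space r \<Longrightarrow> 0 \<le> N x"
  and cnorm_eq_0_iff: "x \<in> cvec_space r \<Longrightarrow> N x = 0 \<longleftrightarrow> x = (\<lambda>_. 0)"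
  and cnorm_scale: "x \<in> cvec_space r \<Longrightarrow> N (\<lambda>k. c * x k) = cmod c * N x"
  and cnorm_triangle: "x \<in> cvec_space r \<Longrightarrow> y \<in> cvec_space r \<Longrightarrow> N (\<lambda>k. x k + y k) \<le> N x + N y"
  using N unfolding is_cnorm_def by blast+

lemma cnorm_pos: "x \<in> cvec_space r \<Longrightarrow> x \<noteq> (\<lambda>_. 0) \<Longrightarrow> 0 < N x"
  using cnorm_nonneg cnorm_eq_0_iff by force

lemma cnorm_zero: "N (\<lambda>_. 0) = 0"
  using cnorm_eq_0_iff[of "\<lambda>_. 0"] by (simp add: cvec_space_def)

lemma cnorm_sum:
  assumes "finite I" and "\<And>i. i \<in> I \<Longrightarrow> x i \<in> cvec_space r"
  shows "N (\<lambda>k. \<Sum>i\<in>I. x i k) \<le> (\<Sum>i\<in>I. N (x i))"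
  using assms
proof (induction I rule: finite_induct)
  case (insert a I)
  have "N (\<lambda>k. \<Sum>i\<in>insert a I. x i k) \<le> N (x a) + N (\<lambda>k. \<Sum>i\<in>I. x i k)"
    using insert cnorm_triangle[of "x a" "\<lambda>k. \<Sum>i\<in>I. x i k"] by (simp add: cvec_sum)
  with insert show ?case by simp
qed (simp add: cnorm_zero)

lemma cnorm_le_l1_norm:
  assumes x: "x \<in> cvec_space r"
  shows "N x \<le> (\<Sum>l<r. N (cvec_unit l)) * l1_norm r x"
proof -
  have "N x \<le> (\<Sum>l<r. N (\<lambda>k. x l * cvec_unit l k))"
    using cvec_eq_sum_units[OF x] cnorm_sum[of "{..<r}" "\<lambda>l k. x l * cvec_unit l k"]
    by (metis cvec_scale cvec_unit_in_cvec_space finite_lessThan lessThan_iff)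
  also have "\<dots> = (\<Sum>l<r. cmod (x l) * N (cvec_unit l))"
    by (intro sum.cong refl cnorm_scale cvec_unit_in_cvec_space) simp
  also have "\<dots> \<le> (\<Sum>l<r. cmod (x l) * (\<Sum>l<r. N (cvec_unit l)))"
    by (intro sum_mono mult_left_mono member_le_sum cnorm_nonneg cvec_unit_in_cvec_space) auto
  also have "\<dots> = (\<Sum>l<r. N (cvec_unit l)) * l1_norm r x"
    unfolding l1_norm_def sum_distrib_right[symmetric] by (rule mult.commute)
  finally show ?thesis .
qed

lemma cnorm_le_limit:
  assumes X: "\<And>j. X j \<in> cvec_space r" and L: "L \<in> cvec_space r"
    and coords: "\<And>l. l < r \<Longrightarrow> (\<lambda>j. X j l) \<longlonglongrightarrow> L l"
    and lim: "(\<lambda>j. N (X j)) \<longlonglongrightarrow> c"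
  shows "N L \<le> c"
proof -
  define K where "K = (\<Sum>l<r. N (cvec_unit l))"
  have "N L \<le> N (X j) + K * l1_norm r (\<lambda>k. L k - X j k)" for j
  proof -
    have "N L = N (\<lambda>k. X j k + (L k - X j k))" by simp
    then have "N L \<le> N (X j) + N (\<lambda>k. L k - X j k)"
      using cnorm_triangle[OF X cvec_diff[OF L X]] by presburger
    then show ?thesis using cnorm_le_l1_norm[OF cvec_diff[OF L X[of j]]] unfolding K_def by linarith
  qed
  moreover have "(\<lambda>j. N (X j) + K * l1_norm r (\<lambda>k. L k - X j k)) \<longlonglongrightarrow> c + K * l1_norm r (\<lambda>k. L k - L k)"
    unfolding l1_norm_def by (intro tendsto_intros lim coords) simp
  ultimately show ?thesis
    by (intro LIMSEQ_le_const) (auto simp: l1_norm_def)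
qed

lemma cnorm_not_tendsto_0_on_l1_sphere:
  assumes X: "\<And>j. X j \<in> cvec_space r" "\<And>j. l1_norm r (X j) = 1"
  shows "\<not> (\<lambda>j. N (X j)) \<longlonglongrightarrow> 0"
proof
  assume N0: "(\<lambda>j. N (X j)) \<longlonglongrightarrow> 0"
  have "cmod (X j l) \<le> 1" for j l
    using coord_le_l1_norm[of l r "X j"] X(1)[of j] by (cases "l < r") (auto simp: X(2) cvec_space_def)
  then obtain \<sigma> where \<sigma>: "strict_mono \<sigma>" "\<forall>l<r. convergent (\<lambda>j. X (\<sigma> j) l)"
    using bounded_coords_convergent_subseq by blast
  define L where "L l = (if l < r then lim (\<lambda>j. X (\<sigma> j) l) else 0)" for l
  have L: "L \<in> cvec_space r" by (simp add: L_def cvec_space_def)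
  have coords: "(\<lambda>j. X (\<sigma> j) l) \<longlonglongrightarrow> L l" if "l < r" for l
    using \<sigma>(2) that by (simp add: L_def convergent_LIMSEQ_iff)
  have "(\<lambda>j. l1_norm r (X (\<sigma> j))) \<longlonglongrightarrow> l1_norm r L"
    unfolding l1_norm_def by (intro tendsto_intros coords) simp
  moreover have "(\<lambda>j. l1_norm r (X (\<sigma> j))) \<longlonglongrightarrow> 1" by (simp add: X(2))
  ultimately have "l1_norm r L = 1" by (rule LIMSEQ_unique)
  then have "L \<noteq> (\<lambda>_. 0)" by (auto simp: l1_norm_def)
  then have "0 < N L" by (rule cnorm_pos[OF L])
  moreover have "(\<lambda>j. N (X (\<sigma> j))) \<longlonglongrightarrow> 0"
    using LIMSEQ_subseq_LIMSEQ[OF N0 \<sigma>(1)] by (simp add: comp_def)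
  then have "N L \<le> 0" using cnorm_le_limit[of "\<lambda>j. X (\<sigma> j)" L 0] X(1) L coords by blast
  ultimately show False by simp
qed

lemma cnorm_ge_l1_norm: "\<exists>m>0. \<forall>x\<in>cvec_space r. m * l1_norm r x \<le> N x"
proof (rule ccontr)
  assume "\<not> ?thesis"
  then have "\<exists>x\<in>cvec_space r. N x < inverse (real (Suc j)) * l1_norm r x" for j
    by (metis not_le of_nat_0_less_iff positive_imp_inverse_positive zero_less_Suc)
  then obtain Y where Y: "\<And>j. Y j \<in> cvec_space r" "\<And>j. N (Y j) < inverse (real (Suc j)) * l1_norm r (Y j)"
    by metis
  have l1_pos: "0 < l1_norm r (Y j)" for j
  proof -
    have "0 < inverse (real (Suc j)) * l1_norm r (Y j)"
      using Y(2)[of j] cnorm_nonneg[OF Y(1)[of j]] by linarith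
    then show ?thesis by (simp add: zero_less_mult_iff)
  qed
  define X where "X j = (\<lambda>k. complex_of_real (inverse (l1_norm r (Y j))) * Y j k)" for j
  have X: "X j \<in> cvec_space r" "l1_norm r (X j) = 1" "N (X j) < inverse (real (Suc j))" for j
  proof -
    show "X j \<in> cvec_space r" unfolding X_def by (rule cvec_scale[OF Y(1)])
    show "l1_norm r (X j) = 1" unfolding X_def l1_norm_scale using l1_pos[of j] by (simp add: norm_inverse)
    have "N (X j) = N (Y j) / l1_norm r (Y j)"
      unfolding X_def cnorm_scale[OF Y(1)] using l1_pos[of j] by (simp add: norm_inverse divide_inverse mult.commute)
    also have "\<dots> < inverse (real (Suc j))" using Y(2)[of j] l1_pos[of j] by (simp add: divide_less_eq)
    finally show "N (X j) < inverse (real (Suc j))" .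
  qed
  have "(\<lambda>j. N (X j)) \<longlonglongrightarrow> 0"
  proof (rule tendsto_sandwich[OF _ _ tendsto_const LIMSEQ_inverse_real_of_nat])
    show "\<forall>\<^sub>F j in sequentially. 0 \<le> N (X j)"
      by (intro always_eventually allI cnorm_nonneg X(1))
    show "\<forall>\<^sub>F j in sequentially. N (X j) \<le> inverse (real (Suc j))"
      by (intro always_eventually allI less_imp_le X(3))
  qed
  then show False using cnorm_not_tendsto_0_on_l1_sphere[of X] X(1,2) by blast
qed

lemma cnorm_normalized:
  assumes "x \<in> cvec_space r" and "x \<noteq> (\<lambda>_. 0)"
  shows "N (\<lambda>k. complex_of_real (inverse (N x)) * x k) = 1"
  using cnorm_scale[OF assms(1)] cnorm_pos[OF assms] by (simp add: norm_inverse)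

end

lemma op_norm_bdd_above:
  assumes Nin: "is_cnorm n Nin" and Nout: "is_cnorm m Nout"
  shows "bdd_above {Nout (mat_app m n A x) | x. x \<in> cvec_space n \<and> Nin x = 1}"
proof -
  obtain c where c: "0 < c" "\<And>x. x \<in> cvec_space n \<Longrightarrow> c * l1_norm n x \<le> Nin x"
    using cnorm_ge_l1_norm[OF Nin] by blast
  define K where "K = (\<Sum>k<m. Nout (cvec_unit k))"
  define S where "S = (\<Sum>k<m. \<Sum>l<n. cmod (A k l))"
  have "0 \<le> K" unfolding K_def by (intro sum_nonneg cnorm_nonneg[OF Nout] cvec_unit_in_cvec_space) simp
  have "Nout (mat_app m n A x) \<le> K * (S * (1 / c))" if x: "x \<in> cvec_space n" "Nin x = 1" for x
  proof -
    have "Nout (mat_app m n A x) \<le> K * l1_norm m (mat_app m n A x)"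
      unfolding K_def by (rule cnorm_le_l1_norm[OF Nout mat_app_in_cvec_space])
    also have "\<dots> \<le> K * (S * l1_norm n x)"
      unfolding S_def by (intro mult_left_mono l1_norm_mat_app x(1) \<open>0 \<le> K\<close>)
    also have "\<dots> \<le> K * (S * (1 / c))"
      using c(2)[OF x(1)] x(2) c(1) \<open>0 \<le> K\<close>
      by (intro mult_left_mono) (auto simp: S_def le_divide_eq mult.commute intro!: sum_nonneg)
    finally show ?thesis .
  qed
  then show ?thesis unfolding bdd_above_def by blast
qed

lemma op_norm_bound:
  assumes Nin: "is_cnorm n Nin" and Nout: "is_cnorm m Nout" and x: "x \<in> cvec_space n"
  shows "Nout (mat_app m n A x) \<le> op_norm Nin Nout m n A * Nin x"
proof (cases "x = (\<lambda>_. 0)")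
  case True
  have "mat_app m n A x = (\<lambda>_. 0)" by (rule ext) (simp add: mat_app_def True)
  then show ?thesis using True cnorm_zero[OF Nout] cnorm_zero[OF Nin] by simp
next
  case False
  define y where "y = (\<lambda>k. complex_of_real (inverse (Nin x)) * x k)"
  have "Nin y = 1" unfolding y_def by (rule cnorm_normalized[OF Nin x False])
  moreover have "y \<in> cvec_space n" unfolding y_def by (rule cvec_scale[OF x])
  ultimately have "Nout (mat_app m n A y) \<le> op_norm Nin Nout m n A"
    unfolding op_norm_def by (intro cSup_upper op_norm_bdd_above[OF Nin Nout]) blast
  moreover have "Nout (mat_app m n A y) = Nout (mat_app m n A x) / Nin x"
    unfolding y_def mat_app_scale cnorm_scale[OF Nout mat_app_in_cvec_space]
    using cnorm_nonneg[OF Nin x] by (simp add: norm_inverse divide_inverse mult.commute)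
  ultimately show ?thesis using cnorm_pos[OF Nin x False] by (simp add: divide_le_eq)
qed

lemma op_norm_nonneg:
  assumes Nin: "is_cnorm n Nin" and Nout: "is_cnorm m Nout" and n: "0 < n"
  shows "0 \<le> op_norm Nin Nout m n A"
proof -
  have u: "cvec_unit 0 \<in> cvec_space n" "cvec_unit 0 \<noteq> (\<lambda>_. 0)"
    using n cvec_unit_in_cvec_space[of 0 n] by (auto simp: cvec_unit_def fun_eq_iff)
  define y where "y = (\<lambda>k. complex_of_real (inverse (Nin (cvec_unit 0))) * cvec_unit 0 k)"
  have "y \<in> cvec_space n" "Nin y = 1"
    unfolding y_def by (rule cvec_scale[OF u(1)], rule cnorm_normalized[OF Nin u])
  then have "Nout (mat_app m n A y) \<le> op_norm Nin Nout m n A"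
    unfolding op_norm_def by (intro cSup_upper op_norm_bdd_above[OF Nin Nout]) blast
  then show ?thesis using cnorm_nonneg[OF Nout mat_app_in_cvec_space] order_trans by blast
qed

section \<open>Nonnegative matrices and the spectral radius\<close>

lemma nonzero_vec_index:
  assumes "v \<in> carrier_vec n" and "v \<noteq> 0\<^sub>v n"
  obtains i where "i < n" and "v $ i \<noteq> 0"
  using assms by (metis carrier_vecD eq_vecI index_zero_vec)

lemma spectral_radius_nonneg:
  assumes "A \<in> carrier_mat n n" and "0 < n"
  shows "0 \<le> spectral_radius A"
  using spectral_radius_mem_max(1)[OF assms] by auto

lemma eigenvalue_smult_mat:
  fixes A :: "'a::field mat"
  assumes A: "A \<in> carrier_mat n n" and c: "c \<noteq> 0" and ev: "eigenvalue (c \<cdot>\<^sub>m A) \<mu>"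
  shows "eigenvalue A (\<mu> / c)"
proof -
  obtain x where x: "x \<in> carrier_vec n" "x \<noteq> 0\<^sub>v n" "(c \<cdot>\<^sub>m A) *\<^sub>v x = \<mu> \<cdot>\<^sub>v x"
    using ev A unfolding eigenvalue_def eigenvector_def by auto
  have "A *\<^sub>v x = (\<mu> / c) \<cdot>\<^sub>v x"
  proof (rule eq_vecI)
    fix i assume "i < dim_vec ((\<mu> / c) \<cdot>\<^sub>v x)"
    then have i: "i < n" using x(1) by simp
    have "c * (A *\<^sub>v x) $ i = \<mu> * x $ i"
      using arg_cong[OF x(3), of "\<lambda>y. y $ i"] i A x(1) by (simp add: scalar_prod_def sum_distrib_left mult.assoc)
    then have "(A *\<^sub>v x) $ i = \<mu> * x $ i / c" by (metis c nonzero_mult_div_cancel_left)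
    then show "(A *\<^sub>v x) $ i = ((\<mu> / c) \<cdot>\<^sub>v x) $ i" using i x(1) by simp
  qed (use A x(1) in simp)
  then show ?thesis using A x unfolding eigenvalue_def eigenvector_def by auto
qed

lemma spectral_radius_smult_le:
  assumes A: "A \<in> carrier_mat n n" and n: "0 < n" and c: "c \<noteq> 0"
  shows "spectral_radius (c \<cdot>\<^sub>m A) \<le> cmod c * spectral_radius A"
proof -
  have cA: "c \<cdot>\<^sub>m A \<in> carrier_mat n n" using A by simp
  obtain \<mu> where \<mu>: "eigenvalue (c \<cdot>\<^sub>m A) \<mu>" "spectral_radius (c \<cdot>\<^sub>m A) = cmod \<mu>"
    using spectral_radius_mem_max(1)[OF cA n] unfolding spectrum_def by auto
  have "cmod (\<mu> / c) \<le> spectral_radius A"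
    using eigenvalue_smult_mat[OF A c \<mu>(1)] spectral_radius_mem_max(2)[OF A n]
    unfolding spectrum_def by auto
  then show ?thesis using \<mu>(2) c by (simp add: norm_divide field_simps)
qed

lemma mult_mat_vec_mono:
  fixes B :: "real mat"
  assumes B: "B \<in> carrier_mat n n" "\<forall>i<n. \<forall>j<n. 0 \<le> B $$ (i, j)"
    and xy: "x \<in> carrier_vec n" "y \<in> carrier_vec n" "\<forall>j<n. x $ j \<le> y $ j" and i: "i < n"
  shows "(B *\<^sub>v x) $ i \<le> (B *\<^sub>v y) $ i"
  using B xy i by (auto simp: scalar_prod_def intro!: sum_mono mult_left_mono)

lemma pow_mat_nonneg:
  fixes B :: "real mat"
  assumes B: "B \<in> carrier_mat n n" "\<forall>i<n. \<forall>j<n. 0 \<le> B $$ (i, j)"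
  shows "\<forall>i<n. \<forall>j<n. 0 \<le> (B ^\<^sub>m k) $$ (i, j)"
proof (induction k)
  case (Suc k)
  then show ?case
    using B pow_carrier_mat[OF B(1), of k] by (auto simp: scalar_prod_def intro!: sum_nonneg)
qed (use B in simp)

lemma pow_mat_mult_vec_ge:
  fixes B :: "real mat"
  assumes B: "B \<in> carrier_mat n n" "\<forall>i<n. \<forall>j<n. 0 \<le> B $$ (i, j)"
    and v: "v \<in> carrier_vec n" and q: "0 \<le> q" and sub: "\<forall>i<n. q * v $ i \<le> (B *\<^sub>v v) $ i"
  shows "\<forall>i<n. q ^ k * v $ i \<le> (B ^\<^sub>m k *\<^sub>v v) $ i"
proof (induction k)
  case 0
  then show ?case using B v by simp
next
  case (Suc k)
  have Bk: "B ^\<^sub>m k \<in> carrier_mat n n" using B(1) by simp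
  show ?case
  proof (intro allI impI)
    fix i assume i: "i < n"
    have "q ^ Suc k * v $ i = q * (q ^ k * v $ i)" by simp
    also have "\<dots> \<le> q * (B ^\<^sub>m k *\<^sub>v v) $ i" using Suc i q by (intro mult_left_mono) auto
    also have "\<dots> = (B ^\<^sub>m k *\<^sub>v (q \<cdot>\<^sub>v v)) $ i" using B(1) v i by (simp add: mult_mat_vec)
    also have "\<dots> \<le> (B ^\<^sub>m k *\<^sub>v (B *\<^sub>v v)) $ i"
      using Bk pow_mat_nonneg[OF B] v B(1) sub i by (intro mult_mat_vec_mono) auto
    also have "\<dots> = (B ^\<^sub>m Suc k *\<^sub>v v) $ i" using assoc_mult_mat_vec[OF Bk B(1) v] by simp
    finally show "q ^ Suc k * v $ i \<le> (B ^\<^sub>m Suc k *\<^sub>v v) $ i" .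
  qed
qed

lemma bounded_powers_not_expanding:
  fixes B :: "real mat"
  assumes B: "B \<in> carrier_mat n n" "\<forall>i<n. \<forall>j<n. 0 \<le> B $$ (i, j)"
    and bound: "\<And>k i j. i < n \<Longrightarrow> j < n \<Longrightarrow> \<bar>(B ^\<^sub>m k) $$ (i, j)\<bar> \<le> K"
    and v: "v \<in> carrier_vec n" "\<forall>i<n. 0 \<le> v $ i" "i0 < n" "0 < v $ i0"
    and q: "1 < q"
  shows "\<not> (\<forall>i<n. q * v $ i \<le> (B *\<^sub>v v) $ i)"
proof
  assume sub: "\<forall>i<n. q * v $ i \<le> (B *\<^sub>v v) $ i"
  define S where "S = (\<Sum>j<n. v $ j)"
  obtain k where k: "K * S / v $ i0 < q ^ k" using real_arch_pow[OF q] by blast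
  have "q ^ k * v $ i0 \<le> (B ^\<^sub>m k *\<^sub>v v) $ i0"
    using pow_mat_mult_vec_ge[OF B v(1) _ sub] q v(3) by auto
  also have "\<dots> = (\<Sum>j<n. (B ^\<^sub>m k) $$ (i0, j) * v $ j)"
    using B(1) v(1,3) by (simp add: scalar_prod_def atLeast0LessThan)
  also have "\<dots> \<le> (\<Sum>j<n. K * v $ j)"
    using bound v(2,3) by (intro sum_mono mult_right_mono) (auto dest: abs_le_D1)
  also have "\<dots> = K * S" by (simp add: S_def sum_distrib_left)
  finally show False using k v(4) by (simp add: pos_divide_less_eq)
qed

lemma spectral_radius_ge_subinvariant:
  fixes B :: "real mat"
  assumes B: "B \<in> carrier_mat n n" "\<forall>i<n. \<forall>j<n. 0 \<le> B $$ (i, j)"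
    and v: "v \<in> carrier_vec n" "\<forall>i<n. 0 \<le> v $ i" "v \<noteq> 0\<^sub>v n"
    and sub: "\<forall>i<n. s * v $ i \<le> (B *\<^sub>v v) $ i"
  shows "s \<le> spectral_radius (map_mat of_real B)"
proof (rule ccontr)
  let ?A = "map_mat complex_of_real B"
  have A: "?A \<in> carrier_mat n n" using B(1) by simp
  obtain i0 where i0: "i0 < n" "0 < v $ i0"
    using v by (metis nonzero_vec_index less_eq_real_def)
  then have n: "0 < n" by simp
  assume "\<not> s \<le> spectral_radius ?A"
  moreover have "0 \<le> spectral_radius ?A" by (rule spectral_radius_nonneg[OF A n])
  ultimately obtain t where t: "0 < t" "spectral_radius ?A < t" "t < s"
    by (metis dense less_le_trans not_le)
  define C where "C = (1 / t) \<cdot>\<^sub>m B"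
  have C: "C \<in> carrier_mat n n" "\<forall>i<n. \<forall>j<n. 0 \<le> C $$ (i, j)"
    using B t(1) by (auto simp: C_def)
  have "map_mat complex_of_real C = complex_of_real (1 / t) \<cdot>\<^sub>m ?A"
    using B(1) by (auto simp: C_def)
  then have "spectral_radius (map_mat complex_of_real C) \<le> spectral_radius ?A / t"
    using spectral_radius_smult_le[OF A n, of "complex_of_real (1 / t)"] t(1) by (simp add: norm_divide)
  also have "\<dots> < 1" using t by simp
  finally obtain K where K: "\<And>k. norm_bound (map_mat complex_of_real C ^\<^sub>m k) K"
    using spectral_radius_jnf_norm_bound_less_1_upper_triangular[of _ n] C(1) by fastforce
  have "\<bar>(C ^\<^sub>m k) $$ (i, j)\<bar> \<le> K" if "i < n" "j < n" for k i j
    using K[of k] that C(1) unfolding norm_bound_def of_real_hom.mat_hom_pow[OF C(1), symmetric]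
    by auto
  moreover have "\<forall>i<n. s / t * v $ i \<le> (C *\<^sub>v v) $ i"
    using sub t(1) B(1) v(1) by (auto simp: C_def scalar_prod_def sum_divide_distrib[symmetric] divide_right_mono)
  moreover have "1 < s / t" using t by simp
  ultimately show False
    using bounded_powers_not_expanding[OF C _ v(1,2) i0] by blast
qed

lemma eigenvector_abs_le_dominating:
  fixes A :: "complex mat" and B :: "real mat"
  assumes A: "A \<in> carrier_mat n n" and B: "B \<in> carrier_mat n n"
    and dom: "\<forall>i<n. \<forall>j<n. cmod (A $$ (i, j)) \<le> W * B $$ (i, j)"
    and x: "x \<in> carrier_vec n" "A *\<^sub>v x = \<mu> \<cdot>\<^sub>v x" and i: "i < n"
  shows "cmod \<mu> * cmod (x $ i) \<le> W * (B *\<^sub>v vec n (\<lambda>j. cmod (x $ j))) $ i"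
proof -
  have "cmod \<mu> * cmod (x $ i) = cmod (\<Sum>j<n. A $$ (i, j) * x $ j)"
    using arg_cong[OF x(2), of "\<lambda>y. y $ i"] i A x(1)
    by (simp add: scalar_prod_def norm_mult atLeast0LessThan)
  also have "\<dots> \<le> (\<Sum>j<n. cmod (A $$ (i, j)) * cmod (x $ j))"
    by (rule order_trans[OF norm_sum]) (simp add: norm_mult)
  also have "\<dots> \<le> (\<Sum>j<n. W * B $$ (i, j) * cmod (x $ j))"
    using dom i by (intro sum_mono mult_right_mono) auto
  also have "\<dots> = W * (B *\<^sub>v vec n (\<lambda>j. cmod (x $ j))) $ i"
    using i B by (simp add: scalar_prod_def sum_distrib_left atLeast0LessThan mult.assoc)
  finally show ?thesis .
qed

lemma spectral_radius_le_dominating: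
  fixes A :: "complex mat" and B :: "real mat"
  assumes A: "A \<in> carrier_mat n n" and n: "0 < n"
    and B: "B \<in> carrier_mat n n" "\<forall>i<n. \<forall>j<n. 0 \<le> B $$ (i, j)"
    and W: "0 \<le> W" and dom: "\<forall>i<n. \<forall>j<n. cmod (A $$ (i, j)) \<le> W * B $$ (i, j)"
  shows "spectral_radius A \<le> W * spectral_radius (map_mat of_real B)"
proof -
  obtain \<mu> x where \<mu>: "spectral_radius A = cmod \<mu>"
    and x: "x \<in> carrier_vec n" "x \<noteq> 0\<^sub>v n" "A *\<^sub>v x = \<mu> \<cdot>\<^sub>v x"
    using spectral_radius_mem_max(1)[OF A n] A
    unfolding spectrum_def eigenvalue_def eigenvector_def by auto
  define v where "v = vec n (\<lambda>j. cmod (x $ j))"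
  obtain j0 where "j0 < n" "x $ j0 \<noteq> 0" using nonzero_vec_index[OF x(1,2)] .
  then have v: "v \<in> carrier_vec n" "\<forall>i<n. 0 \<le> v $ i" "v \<noteq> 0\<^sub>v n" "0 < v $ j0"
    by (auto simp: v_def dest: arg_cong[of _ _ "\<lambda>y. y $ j0"])
  have sub: "\<forall>i<n. cmod \<mu> * v $ i \<le> W * (B *\<^sub>v v) $ i"
    using eigenvector_abs_le_dominating[OF A B(1) dom x(1,3)] by (simp add: v_def)
  show ?thesis
  proof (cases "W = 0")
    case True
    with sub v(4) \<open>j0 < n\<close> have "\<mu> = 0" by (auto simp: mult_le_0_iff)
    then show ?thesis using \<mu> True by simp
  next
    case False
    then have "cmod \<mu> / W \<le> spectral_radius (map_mat of_real B)"
      using sub W by (intro spectral_radius_ge_subinvariant[OF B v(1-3)]) (auto simp: field_simps)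
    then show ?thesis using \<mu> W False by (simp add: field_simps)
  qed
qed

section \<open>Scalar-weight operators as matrices\<close>

(* The matrix of the scalar-weight operator M(w) in the basis of directed edges enumerated by h. *)
definition edge_mat :: "(nat \<Rightarrow> 'v dedge) \<Rightarrow> nat \<Rightarrow> ('v dedge \<Rightarrow> 'v dedge \<Rightarrow> 'a::zero) \<Rightarrow> 'a mat" where
  "edge_mat h n w = mat n n (\<lambda>(a, b). if arc (h b) (h a) then w (h a) (h b) else 0)"

lemma edge_mat_carrier [simp]: "edge_mat h n w \<in> carrier_mat n n"
  and edge_mat_dim [simp]: "dim_row (edge_mat h n w) = n" "dim_col (edge_mat h n w) = n"
  by (simp_all add: edge_mat_def)

lemma map_mat_edge_mat: "f 0 = 0 \<Longrightarrow> map_mat f (edge_mat h n w) = edge_mat h n (\<lambda>e e'. f (w e e'))"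
  by (auto simp: edge_mat_def)

lemma edge_mat_mult_vec:
  fixes w :: "'v dedge \<Rightarrow> 'v dedge \<Rightarrow> 'a::semiring_0"
  assumes h: "bij_betw h {0..<n} (dedges F)" and a: "a < n"
  shows "(edge_mat h n w *\<^sub>v vec n (\<lambda>b. x (h b))) $ a
    = (\<Sum>e'\<in>{e' \<in> dedges F. arc e' (h a)}. w (h a) e' * x e')"
proof -
  have "(edge_mat h n w *\<^sub>v vec n (\<lambda>b. x (h b))) $ a
      = (\<Sum>b = 0..<n. (\<lambda>e'. if arc e' (h a) then w (h a) e' * x e' else 0) (h b))"
    using a by (auto simp: edge_mat_def scalar_prod_def intro: sum.cong)
  also have "\<dots> = (\<Sum>e'\<in>dedges F. if arc e' (h a) then w (h a) e' * x e' else 0)"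
    by (rule sum.reindex_bij_betw[OF h])
  also have "\<dots> = (\<Sum>e'\<in>{e' \<in> dedges F. arc e' (h a)}. w (h a) e' * x e')"
    using bij_betw_finite[OF h] by (simp add: sum.inter_filter)
  finally show ?thesis .
qed

definition arc_weight :: "('v set \<Rightarrow> 'v \<Rightarrow> 'v \<Rightarrow> nat \<Rightarrow> nat \<Rightarrow> complex) \<Rightarrow> 'v dedge \<Rightarrow> 'v dedge \<Rightarrow> complex" where
  "arc_weight v e e' = v (fst e) (snd e') (snd e) 0 0"

definition dedge_vec :: "(nat \<Rightarrow> 'v dedge) \<Rightarrow> nat \<Rightarrow> ('v dedge \<Rightarrow> nat \<Rightarrow> complex) \<Rightarrow> complex vec" where
  "dedge_vec h n f = vec n (\<lambda>b. f (h b) 0)"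

lemma dspace_vanishes: "f \<in> dspace F r \<Longrightarrow> e \<notin> dedges F \<or> r (snd e) \<le> k \<Longrightarrow> f e k = 0"
  unfolding dspace_def by blast

lemma M_op_scalar:
  "M_op F (\<lambda>_. 1) v f e k = (if e \<in> dedges F \<and> k = 0
     then (\<Sum>e'\<in>{e' \<in> dedges F. arc e' e}. arc_weight v e e' * f e' 0) else 0)"
  by (auto simp: M_op_def mat_app_def arc_weight_def)

lemma M_op_scalar_in_dspace: "M_op F (\<lambda>_. 1) v f \<in> dspace F (\<lambda>_. 1)"
  unfolding dspace_def M_op_scalar by auto

lemma dedge_vec_M_op_scalar:
  assumes h: "bij_betw h {0..<n} (dedges F)"
  shows "dedge_vec h n (M_op F (\<lambda>_. 1) v f) = edge_mat h n (arc_weight v) *\<^sub>v dedge_vec h n f"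
proof (rule eq_vecI)
  fix a assume "a < dim_vec (edge_mat h n (arc_weight v) *\<^sub>v dedge_vec h n f)"
  then have a: "a < n" by simp
  show "dedge_vec h n (M_op F (\<lambda>_. 1) v f) $ a = (edge_mat h n (arc_weight v) *\<^sub>v dedge_vec h n f) $ a"
    using edge_mat_mult_vec[OF h a, of "arc_weight v" "\<lambda>e. f e 0"] bij_betwE[OF h] a
    unfolding M_op_scalar by (simp add: dedge_vec_def)
qed (simp add: dedge_vec_def)

lemma dedge_vec_inj:
  assumes h: "bij_betw h {0..<n} (dedges F)"
    and f: "f \<in> dspace F (\<lambda>_. 1)" and g: "g \<in> dspace F (\<lambda>_. 1)"
    and eq: "dedge_vec h n f = dedge_vec h n g"
  shows "f = g"
proof (intro ext)
  fix e k
  show "f e k = g e k"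
  proof (cases "e \<in> dedges F \<and> k = 0")
    case True
    then obtain a where "a < n" "e = h a" using h by (force simp: bij_betw_def)
    then show ?thesis using arg_cong[OF eq, of "\<lambda>x. x $ a"] True by (simp add: dedge_vec_def)
  next
    case False
    then show ?thesis using dspace_vanishes[OF f, of e k] dspace_vanishes[OF g, of e k] by auto
  qed
qed

lemma dedge_vec_surj:
  assumes h: "bij_betw h {0..<n} (dedges F)" and x: "x \<in> carrier_vec n"
  obtains f where "f \<in> dspace F (\<lambda>_. 1)" and "dedge_vec h n f = x"
proof
  let ?f = "\<lambda>e k. if e \<in> dedges F \<and> k = 0 then x $ inv_into {0..<n} h e else 0"
  show "?f \<in> dspace F (\<lambda>_. 1)" by (simp add: dspace_def)
  show "dedge_vec h n ?f = x"
    using x bij_betwE[OF h] bij_betw_inv_into_left[OF h] by (auto simp: dedge_vec_def)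
qed

lemma is_eigenvalue_scalar_iff_eigenvalue:
  assumes h: "bij_betw h {0..<n} (dedges F)"
  shows "is_eigenvalue (dspace F (\<lambda>_. 1)) (M_op F (\<lambda>_. 1) v) c
    \<longleftrightarrow> eigenvalue (edge_mat h n (arc_weight v)) c"
proof -
  let ?A = "edge_mat h n (arc_weight v)"
  have eigen_iff: "(f \<noteq> (\<lambda>_ _. 0) \<and> M_op F (\<lambda>_. 1) v f = (\<lambda>e k. c * f e k))
      \<longleftrightarrow> eigenvector ?A (dedge_vec h n f) c" if f: "f \<in> dspace F (\<lambda>_. 1)" for f
  proof -
    have cf: "(\<lambda>e k. c * f e k) \<in> dspace F (\<lambda>_. 1)" and zero: "(\<lambda>_ _. 0) \<in> dspace F (\<lambda>_. 1)"
      using f by (auto simp: dspace_def)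
    have "M_op F (\<lambda>_. 1) v f = (\<lambda>e k. c * f e k)
        \<longleftrightarrow> dedge_vec h n (M_op F (\<lambda>_. 1) v f) = dedge_vec h n (\<lambda>e k. c * f e k)"
      using dedge_vec_inj[OF h M_op_scalar_in_dspace cf] by metis
    also have "\<dots> \<longleftrightarrow> ?A *\<^sub>v dedge_vec h n f = c \<cdot>\<^sub>v dedge_vec h n f"
      unfolding dedge_vec_M_op_scalar[OF h] by (auto simp: dedge_vec_def)
    finally have "M_op F (\<lambda>_. 1) v f = (\<lambda>e k. c * f e k) \<longleftrightarrow> ?A *\<^sub>v dedge_vec h n f = c \<cdot>\<^sub>v dedge_vec h n f" .
    moreover have "f = (\<lambda>_ _. 0) \<longleftrightarrow> dedge_vec h n f = 0\<^sub>v n"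
      using dedge_vec_inj[OF h f zero] by (auto simp: dedge_vec_def zero_vec_def)
    ultimately show ?thesis by (auto simp: eigenvector_def dedge_vec_def)
  qed
  show ?thesis
    unfolding is_eigenvalue_def eigenvalue_def
    using eigen_iff dedge_vec_surj[OF h] by (metis edge_mat_dim(1) eigenvector_def)
qed

lemma rho_M_scalar_eq_spectral_radius:
  assumes h: "bij_betw h {0..<n} (dedges F)" and n: "0 < n"
  shows "rho_M F (\<lambda>_. 1) v = spectral_radius (edge_mat h n (arc_weight v))"
proof -
  let ?A = "edge_mat h n (arc_weight v)"
  let ?S = "cmod ` spectrum ?A"
  have "finite (spectrum ?A)" "spectrum ?A \<noteq> {}"
    by (rule card_finite_spectrum(1)[OF edge_mat_carrier], rule spectrum_non_empty[OF edge_mat_carrier n])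
  then have S: "finite ?S" "?S \<noteq> {}" "\<forall>x\<in>?S. 0 \<le> x" by auto
  have "rho_M F (\<lambda>_. 1) v = Sup (insert 0 ?S)"
    unfolding rho_M_def spectral_radius_op_def is_eigenvalue_scalar_iff_eigenvalue[OF h]
    by (simp add: spectrum_def)
  also have "\<dots> = Max ?S"
    using S by (simp add: cSup_eq_Max Max_insert max_def Max_ge_iff)
  finally show ?thesis by (simp add: spectral_radius_def)
qed

lemma rho_M_no_dedges:
  assumes "dedges F = {}"
  shows "rho_M F r v = 0"
proof -
  have "f = (\<lambda>_ _. 0)" if "f \<in> dspace F r" for f
    using dspace_vanishes[OF that] assms by (intro ext) auto
  then have "{c. is_eigenvalue (dspace F r) (M_op F r v) c} = {}"
    by (auto simp: is_eigenvalue_def)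
  then show ?thesis by (simp add: rho_M_def spectral_radius_op_def)
qed

section \<open>Comparison of spectral radii\<close>

definition arc_op_norm :: "('v \<Rightarrow> (nat \<Rightarrow> complex) \<Rightarrow> real) \<Rightarrow> ('v \<Rightarrow> nat)
    \<Rightarrow> ('v set \<Rightarrow> 'v \<Rightarrow> 'v \<Rightarrow> nat \<Rightarrow> nat \<Rightarrow> complex) \<Rightarrow> 'v dedge \<Rightarrow> 'v dedge \<Rightarrow> real" where
  "arc_op_norm N r u e e' = op_norm (N (snd e')) (N (snd e)) (r (snd e)) (r (snd e')) (u (fst e) (snd e') (snd e))"

lemma arc_weight_norm_weights:
  "arc_weight (norm_weights N r u) e e' = complex_of_real (arc_op_norm N r u e e')"
  by (simp add: arc_weight_def norm_weights_def arc_op_norm_def)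

lemma snd_dedge_in_Union: "e \<in> dedges F \<Longrightarrow> snd e \<in> \<Union>F"
  by (auto simp: dedges_def)

lemma arc_op_norm_nonneg:
  assumes norms: "\<forall>i\<in>\<Union>F. 0 < r i \<and> is_cnorm (r i) (N i)" and "e \<in> dedges F" "e' \<in> dedges F"
  shows "0 \<le> arc_op_norm N r u e e'"
  using norms snd_dedge_in_Union[OF assms(2)] snd_dedge_in_Union[OF assms(3)]
  unfolding arc_op_norm_def by (intro op_norm_nonneg) auto

lemma cnorm_M_op_le:
  assumes fin: "finite (dedges F)" and norms: "\<forall>i\<in>\<Union>F. 0 < r i \<and> is_cnorm (r i) (N i)"
    and f: "f \<in> dspace F r" and e: "e \<in> dedges F"
  shows "N (snd e) (M_op F r u f e)
    \<le> (\<Sum>e'\<in>{e' \<in> dedges F. arc e' e}. arc_op_norm N r u e e' * N (snd e') (f e'))"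
proof -
  have f_in: "f e' \<in> cvec_space (r (snd e'))" for e'
    using dspace_vanishes[OF f] by (auto simp: cvec_space_def)
  have Ne: "is_cnorm (r (snd e)) (N (snd e))" using norms snd_dedge_in_Union[OF e] by blast
  have "M_op F r u f e = (\<lambda>k. \<Sum>e'\<in>{e' \<in> dedges F. arc e' e}.
      mat_app (r (snd e)) (r (snd e')) (u (fst e) (snd e') (snd e)) (f e') k)"
    using e by (simp add: M_op_def)
  then have "N (snd e) (M_op F r u f e) \<le> (\<Sum>e'\<in>{e' \<in> dedges F. arc e' e}.
      N (snd e) (mat_app (r (snd e)) (r (snd e')) (u (fst e) (snd e') (snd e)) (f e')))"
    using fin by (simp add: cnorm_sum[OF Ne] mat_app_in_cvec_space)
  also have "\<dots> \<le> (\<Sum>e'\<in>{e' \<in> dedges F. arc e' e}. arc_op_norm N r u e e' * N (snd e') (f e'))"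
  proof (rule sum_mono)
    fix e' assume "e' \<in> {e' \<in> dedges F. arc e' e}"
    then have "is_cnorm (r (snd e')) (N (snd e'))" using norms snd_dedge_in_Union by blast
    then show "N (snd e) (mat_app (r (snd e)) (r (snd e')) (u (fst e) (snd e') (snd e)) (f e'))
        \<le> arc_op_norm N r u e e' * N (snd e') (f e')"
      unfolding arc_op_norm_def by (rule op_norm_bound[OF _ Ne f_in])
  qed
  finally show ?thesis .
qed

lemma dedges_enumeration:
  assumes "finite (dedges F)" and "dedges F \<noteq> {}"
  obtains h and n :: nat where "bij_betw h {0..<n} (dedges F)" and "0 < n"
proof -
  obtain h where "bij_betw h {0..<card (dedges F)} (dedges F)"
    using ex_bij_betw_nat_finite[OF assms(1)] by blast
  moreover have "0 < card (dedges F)" using assms card_gt_0_iff by blast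
  ultimately show thesis using that by blast
qed

lemma edge_mat_arc_op_norm_nonneg:
  assumes h: "bij_betw h {0..<n} (dedges F)" and norms: "\<forall>i\<in>\<Union>F. 0 < r i \<and> is_cnorm (r i) (N i)"
  shows "\<forall>a<n. \<forall>b<n. 0 \<le> edge_mat h n (arc_op_norm N r u) $$ (a, b)"
  using arc_op_norm_nonneg[OF norms] bij_betwE[OF h] by (auto simp: edge_mat_def)

lemma eigenvalue_le_spectral_radius_arc_op_norms:
  assumes h: "bij_betw h {0..<n} (dedges F)"
    and fin: "finite (dedges F)" and norms: "\<forall>i\<in>\<Union>F. 0 < r i \<and> is_cnorm (r i) (N i)"
    and ev: "is_eigenvalue (dspace F r) (M_op F r u) c"
  shows "cmod c \<le> spectral_radius (map_mat of_real (edge_mat h n (arc_op_norm N r u)))"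
proof -
  let ?B = "edge_mat h n (arc_op_norm N r u)"
  obtain f where f: "f \<in> dspace F r" "f \<noteq> (\<lambda>_ _. 0)" "M_op F r u f = (\<lambda>e k. c * f e k)"
    using ev unfolding is_eigenvalue_def by blast
  have f_in: "f e \<in> cvec_space (r (snd e))" for e
    using dspace_vanishes[OF f(1)] by (auto simp: cvec_space_def)
  have Ne: "is_cnorm (r (snd e)) (N (snd e))" if "e \<in> dedges F" for e
    using norms snd_dedge_in_Union[OF that] by blast
  obtain e0 k0 where "f e0 k0 \<noteq> 0" using f(2) by blast
  then have e0: "e0 \<in> dedges F" "f e0 \<noteq> (\<lambda>_. 0)"
    using dspace_vanishes[OF f(1), of e0 k0] by (blast, metis)
  define v where "v = vec n (\<lambda>a. N (snd (h a)) (f (h a)))"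
  have v: "v \<in> carrier_vec n" "\<forall>a<n. 0 \<le> v $ a" "v \<noteq> 0\<^sub>v n"
  proof -
    show "v \<in> carrier_vec n" "\<forall>a<n. 0 \<le> v $ a"
      using bij_betwE[OF h] cnorm_nonneg[OF Ne f_in] by (auto simp: v_def)
    obtain a where "a < n" "h a = e0" using h e0(1) by (force simp: bij_betw_def)
    then have "0 < v $ a" using cnorm_pos[OF Ne[OF e0(1)] f_in e0(2)] by (simp add: v_def)
    then show "v \<noteq> 0\<^sub>v n" using \<open>a < n\<close> by auto
  qed
  have "cmod c * v $ a \<le> (?B *\<^sub>v v) $ a" if a: "a < n" for a
  proof -
    have ha: "h a \<in> dedges F" using bij_betwE[OF h] a by simp
    have "cmod c * v $ a = N (snd (h a)) (M_op F r u f (h a))"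
      using a f(3) cnorm_scale[OF Ne[OF ha] f_in] by (simp add: v_def)
    also have "\<dots> \<le> (\<Sum>e'\<in>{e' \<in> dedges F. arc e' (h a)}. arc_op_norm N r u (h a) e' * N (snd e') (f e'))"
      by (rule cnorm_M_op_le[OF fin norms f(1) ha])
    also have "\<dots> = (?B *\<^sub>v v) $ a"
      unfolding v_def by (rule edge_mat_mult_vec[OF h a, symmetric])
    finally show ?thesis .
  qed
  then show ?thesis
    using edge_mat_arc_op_norm_nonneg[OF h norms]
    by (intro spectral_radius_ge_subinvariant[OF edge_mat_carrier _ v]) blast+
qed

lemma rho_M_le_rho_M_norm_weights:
  assumes fin: "finite (dedges F)" and norms: "\<forall>i\<in>\<Union>F. 0 < r i \<and> is_cnorm (r i) (N i)"
  shows "rho_M F r u \<le> rho_M F (\<lambda>_. 1) (norm_weights N r u)"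
proof (cases "dedges F = {}")
  case True
  then show ?thesis by (simp add: rho_M_no_dedges)
next
  case False
  then obtain h and n :: nat where h: "bij_betw h {0..<n} (dedges F)" and n: "0 < n"
    by (rule dedges_enumeration[OF fin])
  let ?B = "edge_mat h n (arc_op_norm N r u)"
  have "rho_M F (\<lambda>_. 1) (norm_weights N r u) = spectral_radius (map_mat of_real ?B)"
    using rho_M_scalar_eq_spectral_radius[OF h n]
    by (simp add: map_mat_edge_mat arc_weight_norm_weights[abs_def])
  moreover have "0 \<le> spectral_radius (map_mat of_real ?B)"
    using n by (intro spectral_radius_nonneg) auto
  ultimately show ?thesis
    using eigenvalue_le_spectral_radius_arc_op_norms[OF h fin norms]
    unfolding rho_M_def[of F r] spectral_radius_op_def by (intro cSup_least) auto
qed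

lemma rho_M_norm_weights_le:
  assumes fin: "finite (dedges F)" and norms: "\<forall>i\<in>\<Union>F. 0 < r i \<and> is_cnorm (r i) (N i)"
    and W: "0 \<le> W" "\<forall>e\<in>dedges F. \<forall>e'\<in>dedges F. arc e' e \<longrightarrow> arc_op_norm N r u e e' \<le> W"
  shows "rho_M F (\<lambda>_. 1) (norm_weights N r u) \<le> W * rho_M F (\<lambda>_. 1) (\<lambda>_ _ _ _ _. 1)"
proof (cases "dedges F = {}")
  case True
  then show ?thesis by (simp add: rho_M_no_dedges)
next
  case False
  then obtain h and n :: nat where h: "bij_betw h {0..<n} (dedges F)" and n: "0 < n"
    by (rule dedges_enumeration[OF fin])
  let ?A = "edge_mat h n (arc_weight (norm_weights N r u))"
  let ?B = "edge_mat h n (\<lambda>_ _. 1 :: real)"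
  have "rho_M F (\<lambda>_. 1) (norm_weights N r u) = spectral_radius ?A"
    by (rule rho_M_scalar_eq_spectral_radius[OF h n])
  also have "\<dots> \<le> W * spectral_radius (map_mat of_real ?B)"
  proof (rule spectral_radius_le_dominating[OF edge_mat_carrier n edge_mat_carrier _ W(1)])
    show "\<forall>a<n. \<forall>b<n. 0 \<le> ?B $$ (a, b)" by (simp add: edge_mat_def)
    show "\<forall>a<n. \<forall>b<n. cmod (?A $$ (a, b)) \<le> W * ?B $$ (a, b)"
    proof (intro allI impI)
      fix a b assume ab: "a < n" "b < n"
      then have "h a \<in> dedges F" "h b \<in> dedges F" using bij_betwE[OF h] by auto
      then show "cmod (?A $$ (a, b)) \<le> W * ?B $$ (a, b)"
        using ab W(2) arc_op_norm_nonneg[OF norms, of "h a" "h b" u]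
        by (simp add: edge_mat_def arc_weight_norm_weights)
    qed
  qed
  also have "map_mat of_real ?B = edge_mat h n (arc_weight (\<lambda>_ _ _ _ _. 1))"
    by (simp add: map_mat_edge_mat arc_weight_def[abs_def])
  also have "spectral_radius \<dots> = rho_M F (\<lambda>_. 1) (\<lambda>_ _ _ _ _. 1)"
    by (rule rho_M_scalar_eq_spectral_radius[OF h n, symmetric])
  finally show ?thesis .
qed

lemma finite_dedges: "finite V \<Longrightarrow> \<forall>\<alpha>\<in>F. \<alpha> \<subseteq> V \<Longrightarrow> finite (dedges F)"
  by (rule finite_subset[of _ "Pow V \<times> V"]) (auto simp: dedges_def)

lemma finite_arc_values:
  assumes "finite V" and "\<forall>\<alpha>\<in>F. \<alpha> \<subseteq> V"
  shows "finite {g \<alpha> i j | \<alpha> i j. \<alpha> \<in> F \<and> i \<in> \<alpha> \<and> j \<in> \<alpha> \<and> i \<noteq> j}"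
proof (rule finite_subset)
  show "{g \<alpha> i j | \<alpha> i j. \<alpha> \<in> F \<and> i \<in> \<alpha> \<and> j \<in> \<alpha> \<and> i \<noteq> j}
      \<subseteq> (\<lambda>(\<alpha>, i, j). g \<alpha> i j) ` (Pow V \<times> V \<times> V)"
  proof
    fix x assume "x \<in> {g \<alpha> i j | \<alpha> i j. \<alpha> \<in> F \<and> i \<in> \<alpha> \<and> j \<in> \<alpha> \<and> i \<noteq> j}"
    then obtain \<alpha> i j where "x = g \<alpha> i j" "\<alpha> \<in> F" "i \<in> \<alpha>" "j \<in> \<alpha>" by blast
    then show "x \<in> (\<lambda>(\<alpha>, i, j). g \<alpha> i j) ` (Pow V \<times> V \<times> V)"
      using assms(2) by (intro image_eqI[of _ _ "(\<alpha>, i, j)"]) auto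
  qed
qed (use assms in simp)

theorem proposition1:
  fixes V :: "'v set" and F :: "'v set set" and r :: "'v \<Rightarrow> nat"
    and u :: "'v set \<Rightarrow> 'v \<Rightarrow> 'v \<Rightarrow> nat \<Rightarrow> nat \<Rightarrow> complex"
    and N :: "'v \<Rightarrow> (nat \<Rightarrow> complex) \<Rightarrow> real"
  assumes "finite V" and "\<forall>\<alpha>\<in>F. \<alpha> \<subseteq> V"
    and "\<forall>i\<in>V. 0 < r i"
    and "\<forall>i\<in>V. is_cnorm (r i) (N i)"
  shows "rho_M F r u \<le> rho_M F (\<lambda>_. 1) (norm_weights N r u)
    \<and> rho_M F (\<lambda>_. 1) (norm_weights N r u)
        \<le> Max (insert 0 {op_norm (N i) (N j) (r j) (r i) (u \<alpha> i j) | \<alpha> i j. \<alpha> \<in> F \<and> i \<in> \<alpha> \<and> j \<in> \<alpha> \<and> i \<noteq> j})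
          * rho_M F (\<lambda>_. 1) (\<lambda>_ _ _ _ _. 1)"
proof -
  define S where "S = {op_norm (N i) (N j) (r j) (r i) (u \<alpha> i j) | \<alpha> i j. \<alpha> \<in> F \<and> i \<in> \<alpha> \<and> j \<in> \<alpha> \<and> i \<noteq> j}"
  have fin: "finite (dedges F)" using finite_dedges[OF assms(1,2)] .
  have norms: "\<forall>i\<in>\<Union>F. 0 < r i \<and> is_cnorm (r i) (N i)" using assms(2-4) by blast
  have finS: "finite (insert 0 S)" unfolding S_def using finite_arc_values[OF assms(1,2)] by simp
  have "arc_op_norm N r u e e' \<in> S" if "e \<in> dedges F" "arc e' e" for e e'
    using that unfolding S_def arc_op_norm_def dedges_def arc_def by (cases e, cases e') auto
  then have "\<forall>e\<in>dedges F. \<forall>e'\<in>dedges F. arc e' e \<longrightarrow> arc_op_norm N r u e e' \<le> Max (insert 0 S)"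
    using finS by auto
  moreover have "0 \<le> Max (insert 0 S)" using finS by simp
  ultimately show ?thesis
    using rho_M_le_rho_M_norm_weights[OF fin norms] rho_M_norm_weights_le[OF fin norms]
    unfolding S_def by blast
qed

end
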